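(* Let $\|\cdot\|$ be a monotone norm on $\mathbb{R}^K$, let $T \ge 1$, and let $\boldsymbol{\alpha}_1,\dots,\boldsymbol{\alpha}_T \in \Delta(K)$ and $\mathbf{l}_1,\dots,\mathbf{l}_T \in [0,1]^K$. Let $\bar{\mathbf{r}}_T = \frac{1}{T}\sum_{t=1}^T (\boldsymbol{\alpha}_t\odot\mathbf{l}_t, \mathbf{l}_t) \in \mathbb{R}^K\times\mathbb{R}^K$ and suppose $\min_{\mathbf{s} \in S}\|\bar{\mathbf{r}}_T - \mathbf{s}\|^+ \le \gamma$. Then \[ \Big\|\sum_{t=1}^T \boldsymbol{\alpha}_t\odot\mathbf{l}_t\Big\| - C^*\Big(\sum_{t=1}^T \mathbf{l}_t\Big) \le T\gamma. \] Consequently, any algorithm for the repeated game $P$ achieving convergence rate $\gamma(T)$, applied to online load balancing, has $\mathrm{Regret}(T) \le T\gamma(T)$.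
   Context: $\Delta(K) = \{\boldsymbol{\alpha} \in [0,1]^K : \sum_i \alpha_i = 1\}$; $\boldsymbol{\alpha}\odot\mathbf{l} = (\alpha_1 l_1,\dots,\alpha_K l_K)$; $C^*(\mathbf{l}) = \min_{\boldsymbol{\alpha}\in\Delta(K)}\|\boldsymbol{\alpha}\odot\mathbf{l}\|$. A norm is monotone if $\|\mathbf{x}\|\le\|\mathbf{y}\|$ whenever $|x_i|\le|y_i|$ for all $i$. $S = \{(\mathbf{x},\mathbf{y}) \in [0,1]^K\times[0,1]^K : \|\mathbf{x}\| \le C^*(\mathbf{y})\}$ and $\|(\mathbf{x},\mathbf{y})\|^+ = \|\mathbf{x}\|+\|\mathbf{y}\|$. Online load balancing: in each round $t=1,\dots,T$ the learner picks $\boldsymbol{\alpha}_t\in\Delta(K)$, then an adversary reveals $\mathbf{l}_t \in [0,1]^K$; $\mathrm{Regret}(T) = \|\sum_t \boldsymbol{\alpha}_t\odot\mathbf{l}_t\| - C^*(\sum_t \mathbf{l}_t)$. The repeated game $P$ has learner actions $\Delta(K)$, adversary actions $[0,1]^K$, vector payoff $r(\boldsymbol{\alpha},\mathbf{l}) = (\boldsymbol{\alpha}\odot\mathbf{l},\mathbf{l})$, target set $S$, and metric $\mathrm{dist}(\mathbf{r},\mathbf{s}) = \|\mathbf{r}-\mathbf{s}\|^+$; an algorithm has convergence rate $\gamma(T)$ if against every adversary $\min_{\mathbf{s}\in S}\mathrm{dist}(\bar{\mathbf{r}}_T,\mathbf{s}) \le \gamma(T)$, where $\bar{\mathbf{r}}_T$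 is the average payoff. *)

theory Defs
  imports "HOL-Analysis.Analysis"
begin

definition is_norm :: "(real^'k \<Rightarrow> real) \<Rightarrow> bool" where
  "is_norm N \<longleftrightarrow>
     (\<forall>x. N x = 0 \<longleftrightarrow> x = 0) \<and>
     (\<forall>c x. N (c *\<^sub>R x) = \<bar>c\<bar> * N x) \<and>
     (\<forall>x y. N (x + y) \<le> N x + N y)"

definition monotone_norm :: "(real^'k \<Rightarrow> real) \<Rightarrow> bool" where
  "monotone_norm N \<longleftrightarrow> is_norm N \<and>
     (\<forall>x y. (\<forall>i. \<bar>x $ i\<bar> \<le> \<bar>y $ i\<bar>) \<longrightarrow> N x \<le> N y)"

definition prob_simplex :: "(real^'k) set" where
  "prob_simplex = {a. (\<forall>i. 0 \<le> a $ i \<and> a $ i \<le> 1) \<and> (\<Sum>i\<in>UNIV. a $ i) = 1}"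

definition unit_cube :: "(real^'k) set" where
  "unit_cube = {x. \<forall>i. 0 \<le> x $ i \<and> x $ i \<le> 1}"

definition odot :: "real^'k \<Rightarrow> real^'k \<Rightarrow> real^'k" where
  "odot a l = (\<chi> i. a $ i * l $ i)"

text \<open>C*(l) = min over the prob_simplex of N(alpha odot l) (the minimum is attained).\<close>
definition Cstar :: "(real^'k \<Rightarrow> real) \<Rightarrow> real^'k \<Rightarrow> real" where
  "Cstar N l = Inf ((\<lambda>a. N (odot a l)) ` prob_simplex)"

definition target_set :: "(real^'k \<Rightarrow> real) \<Rightarrow> ((real^'k) \<times> (real^'k)) set" where
  "target_set N = {(x, y). x \<in> unit_cube \<and> y \<in> unit_cube \<and> N x \<le> Cstar N y}"

definition norm_plus :: "(real^'k \<Rightarrow> real) \<Rightarrow> (real^'k) \<times> (real^'k) \<Rightarrow> real" where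
  "norm_plus N r = N (fst r) + N (snd r)"

definition dist_plus :: "(real^'k \<Rightarrow> real) \<Rightarrow> (real^'k) \<times> (real^'k) \<Rightarrow> (real^'k) \<times> (real^'k) \<Rightarrow> real" where
  "dist_plus N r s = norm_plus N (r - s)"

definition dist_to_target :: "(real^'k \<Rightarrow> real) \<Rightarrow> (real^'k) \<times> (real^'k) \<Rightarrow> real" where
  "dist_to_target N r = Inf (dist_plus N r ` target_set N)"

definition payoff :: "real^'k \<Rightarrow> real^'k \<Rightarrow> (real^'k) \<times> (real^'k)" where
  "payoff a l = (odot a l, l)"

text \<open>A (deterministic) learner maps the history of
  past (action, loss) pairs to an action; an (adaptive) adversary maps the
  history and the learner's current action to a loss vector.
  play L A n is the history after n rounds (round t is the t-th list element).\<close>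
fun play :: "(((real^'k) \<times> (real^'k)) list \<Rightarrow> real^'k) \<Rightarrow>
             (((real^'k) \<times> (real^'k)) list \<Rightarrow> real^'k \<Rightarrow> real^'k) \<Rightarrow> nat \<Rightarrow>
             ((real^'k) \<times> (real^'k)) list" where
  "play L A 0 = []"
| "play L A (Suc n) =
     (let h = play L A n; a = L h; l = A h a in h @ [(a, l)])"

definition valid_learner :: "(((real^'k) \<times> (real^'k)) list \<Rightarrow> real^'k) \<Rightarrow> bool" where
  "valid_learner L \<longleftrightarrow> (\<forall>h. L h \<in> prob_simplex)"

definition valid_adversary :: "(((real^'k) \<times> (real^'k)) list \<Rightarrow> real^'k \<Rightarrow> real^'k) \<Rightarrow> bool" where
  "valid_adversary A \<longleftrightarrow> (\<forall>h a. A h a \<in> unit_cube)"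

definition avg_payoff :: "((real^'k) \<times> (real^'k)) list \<Rightarrow> (real^'k) \<times> (real^'k)" where
  "avg_payoff h = (1 / real (length h)) *\<^sub>R (\<Sum>(a, l)\<leftarrow>h. payoff a l)"

definition has_rate :: "(real^'k \<Rightarrow> real) \<Rightarrow> (((real^'k) \<times> (real^'k)) list \<Rightarrow> real^'k) \<Rightarrow>
                        (nat \<Rightarrow> real) \<Rightarrow> bool" where
  "has_rate N L \<gamma> \<longleftrightarrow>
     (\<forall>A. valid_adversary A \<longrightarrow>
        (\<forall>T\<ge>1. dist_to_target N (avg_payoff (play L A T)) \<le> \<gamma> T))"

definition regret :: "(real^'k \<Rightarrow> real) \<Rightarrow> ((real^'k) \<times> (real^'k)) list \<Rightarrow> real" where
  "regret N h = N (\<Sum>(a, l)\<leftarrow>h. odot a l) - Cstar N (\<Sum>(a, l)\<leftarrow>h. l)"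

end

theory Submission
  imports Defs
begin

text \<open>If \<open>(x, y) \<in> S\<close> then \<open>\<parallel>u\<parallel> \<le> \<parallel>u - x\<parallel> + \<parallel>x\<parallel> \<le> \<parallel>u - x\<parallel> + C*(y) \<le> \<parallel>u - x\<parallel> + C*(v) + \<parallel>y - v\<parallel>\<close>,
  because \<open>C*\<close> is 1-Lipschitz: multiplying by a point of the simplex can only shrink
  coordinates, and the norm is monotone. Hence \<open>\<parallel>u\<parallel> - C*(v)\<close> is at most the distance of
  \<open>(u, v)\<close> to \<open>S\<close>. Applied to the average payoff \<open>(u, v)\<close> and scaled by \<open>T\<close>, using that both
  \<open>\<parallel>\<cdot>\<parallel>\<close> and \<open>C*\<close> are positively homogeneous, this bounds the regret by \<open>T\<gamma>\<close>.\<close>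

lemma monotone_norm_zero: "monotone_norm N \<Longrightarrow> N 0 = 0"
  and monotone_norm_scaleR: "monotone_norm N \<Longrightarrow> N (c *\<^sub>R x) = \<bar>c\<bar> * N x"
  and monotone_norm_triangle: "monotone_norm N \<Longrightarrow> N (x + y) \<le> N x + N y"
  and monotone_norm_mono: "monotone_norm N \<Longrightarrow> (\<And>i. \<bar>x $ i\<bar> \<le> \<bar>y $ i\<bar>) \<Longrightarrow> N x \<le> N y"
  unfolding monotone_norm_def is_norm_def by auto

lemma monotone_norm_minus_commute:
  assumes "monotone_norm N" shows "N (x - y) = N (y - x)"
  using monotone_norm_scaleR[OF assms, of "-1" "x - y"] by simp

lemma monotone_norm_nonneg:
  assumes "monotone_norm N" shows "0 \<le> N x"
proof -
  have "0 = N (x - x)" using monotone_norm_zero[OF assms] by simp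
  also have "\<dots> \<le> N x + N (- x)" using monotone_norm_triangle[OF assms, of x "- x"] by simp
  also have "N (- x) = N x" using monotone_norm_scaleR[OF assms, of "-1" x] by simp
  finally show ?thesis by simp
qed

lemma odot_add: "odot a (u + v) = odot a u + odot a v"
  unfolding odot_def by (simp add: vec_eq_iff algebra_simps)

lemma odot_scaleR: "odot a (c *\<^sub>R u) = c *\<^sub>R odot a u"
  unfolding odot_def by (simp add: vec_eq_iff algebra_simps)

lemma odot_zero: "odot a 0 = 0"
  unfolding odot_def by (simp add: vec_eq_iff)

lemma monotone_norm_odot_le:
  assumes "monotone_norm N" and "a \<in> prob_simplex"
  shows "N (odot a y) \<le> N y"
proof (rule monotone_norm_mono[OF assms(1)])
  fix i
  have "0 \<le> a $ i" "a $ i \<le> 1" using assms(2) unfolding prob_simplex_def by auto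
  then show "\<bar>odot a y $ i\<bar> \<le> \<bar>y $ i\<bar>"
    unfolding odot_def by (simp add: abs_mult mult_left_le_one_le)
qed

lemma prob_simplex_nonempty: "(prob_simplex :: (real^'k) set) \<noteq> {}"
proof -
  fix j :: 'k
  have "axis j 1 \<in> (prob_simplex :: (real^'k) set)"
    unfolding prob_simplex_def by (simp add: axis_def)
  then show ?thesis by blast
qed

lemma Cstar_le:
  assumes "monotone_norm N" and "a \<in> prob_simplex"
  shows "Cstar N y \<le> N (odot a y)"
  unfolding Cstar_def
  by (rule cInf_lower) (use assms monotone_norm_nonneg[OF assms(1)] in \<open>auto intro: bdd_belowI[where m = 0]\<close>)

lemma Cstar_greatest:
  assumes "\<And>a. a \<in> prob_simplex \<Longrightarrow> c \<le> N (odot a y)"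
  shows "c \<le> Cstar N y"
  unfolding Cstar_def using assms prob_simplex_nonempty by (intro cInf_greatest) auto

lemma Cstar_nonneg:
  assumes "monotone_norm N" shows "0 \<le> Cstar N y"
  by (rule Cstar_greatest) (rule monotone_norm_nonneg[OF assms])

lemma Cstar_zero:
  assumes "monotone_norm N" shows "Cstar N 0 = 0"
proof -
  obtain a :: "real^'a" where "a \<in> prob_simplex" using prob_simplex_nonempty by blast
  from Cstar_le[OF assms this, of 0] show ?thesis
    using Cstar_nonneg[OF assms, of 0] by (simp add: odot_zero monotone_norm_zero[OF assms])
qed

lemma Cstar_scaleR:
  assumes N: "monotone_norm N" and c: "0 \<le> c"
  shows "Cstar N (c *\<^sub>R y) = c * Cstar N y"
proof (cases "c = 0")
  case True
  then show ?thesis using Cstar_zero[OF N] by simp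
next
  case False
  have scale: "N (odot a (c *\<^sub>R y)) = c * N (odot a y)" for a
    using c by (simp add: odot_scaleR monotone_norm_scaleR[OF N])
  have "c * Cstar N y \<le> Cstar N (c *\<^sub>R y)"
    using Cstar_le[OF N] c by (intro Cstar_greatest) (simp add: scale mult_left_mono)
  moreover have "Cstar N (c *\<^sub>R y) / c \<le> Cstar N y"
    using Cstar_le[OF N, of _ "c *\<^sub>R y"] c False
    by (intro Cstar_greatest) (simp add: scale divide_le_eq mult.commute)
  ultimately show ?thesis using c False by (simp add: divide_le_eq mult.commute)
qed

lemma Cstar_le_add_norm_diff:
  assumes N: "monotone_norm N"
  shows "Cstar N y \<le> Cstar N v + N (y - v)"
proof -
  have "Cstar N y - N (y - v) \<le> N (odot a v)" if a: "a \<in> prob_simplex" for a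
  proof -
    have "Cstar N y \<le> N (odot a v + odot a (y - v))"
      using Cstar_le[OF N a, of y] by (simp add: odot_add[symmetric])
    also have "\<dots> \<le> N (odot a v) + N (odot a (y - v))" by (rule monotone_norm_triangle[OF N])
    also have "\<dots> \<le> N (odot a v) + N (y - v)" using monotone_norm_odot_le[OF N a] by simp
    finally show ?thesis by simp
  qed
  then have "Cstar N y - N (y - v) \<le> Cstar N v" by (rule Cstar_greatest)
  then show ?thesis by simp
qed

lemma target_set_nonempty:
  assumes "monotone_norm N" shows "target_set N \<noteq> {}"
proof -
  have "(0, 0) \<in> target_set N"
    unfolding target_set_def unit_cube_def
    using assms by (simp add: Cstar_zero monotone_norm_zero)
  then show ?thesis by blast
qed

lemma norm_minus_Cstar_le_dist_plus:
  assumes N: "monotone_norm N" and s: "(x, y) \<in> target_set N"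
  shows "N u - Cstar N v \<le> dist_plus N (u, v) (x, y)"
proof -
  have "N u \<le> N (u - x) + N x" using monotone_norm_triangle[OF N, of "u - x" x] by simp
  also have "N x \<le> Cstar N y" using s unfolding target_set_def by simp
  also have "Cstar N y \<le> Cstar N v + N (v - y)"
    using Cstar_le_add_norm_diff[OF N, of y v] monotone_norm_minus_commute[OF N, of y v] by simp
  finally show ?thesis unfolding dist_plus_def norm_plus_def by simp
qed

lemma norm_minus_Cstar_le_dist_to_target:
  assumes N: "monotone_norm N"
  shows "N u - Cstar N v \<le> dist_to_target N (u, v)"
  unfolding dist_to_target_def using target_set_nonempty[OF N]
  by (intro cInf_greatest) (auto intro: norm_minus_Cstar_le_dist_plus[OF N])

lemma norm_minus_Cstar_le_scaled_dist:
  assumes N: "monotone_norm N" and T: "0 < T"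
  shows "N X - Cstar N Y \<le> T * dist_to_target N ((1 / T) *\<^sub>R (X, Y))"
proof -
  have "N X - Cstar N Y = T * (N ((1 / T) *\<^sub>R X) - Cstar N ((1 / T) *\<^sub>R Y))"
    using T by (simp add: monotone_norm_scaleR[OF N] Cstar_scaleR[OF N] right_diff_distrib)
  also have "\<dots> \<le> T * dist_to_target N ((1 / T) *\<^sub>R (X, Y))"
    using norm_minus_Cstar_le_dist_to_target[OF N] T by (simp add: mult_left_mono)
  finally show ?thesis .
qed

lemma sum_payoff: "(\<Sum>t\<in>A. payoff (a t) (l t)) = (\<Sum>t\<in>A. odot (a t) (l t), \<Sum>t\<in>A. l t)"
  by (simp add: payoff_def prod_eq_iff fst_sum snd_sum)

lemma sum_list_payoff:
  "(\<Sum>(a, l)\<leftarrow>h. payoff a l) = (\<Sum>(a, l)\<leftarrow>h. odot a l, \<Sum>(a, l)\<leftarrow>h. l)"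
  by (induction h) (auto simp: payoff_def zero_prod_def)

lemma length_play: "length (play L A n) = n"
  by (induction n) (auto simp: Let_def)

theorem proposition2:
  fixes N :: "real^'k \<Rightarrow> real"
  assumes mono: "monotone_norm N"
  shows "(\<forall>(T::nat) (\<alpha>::nat \<Rightarrow> real^'k) (l::nat \<Rightarrow> real^'k) (\<gamma>::real).
            T \<ge> 1 \<longrightarrow> (\<forall>t\<in>{1..T}. \<alpha> t \<in> prob_simplex) \<longrightarrow> (\<forall>t\<in>{1..T}. l t \<in> unit_cube) \<longrightarrow>
            dist_to_target N ((1 / real T) *\<^sub>R (\<Sum>t=1..T. payoff (\<alpha> t) (l t))) \<le> \<gamma> \<longrightarrow>
            N (\<Sum>t=1..T. odot (\<alpha> t) (l t)) - Cstar N (\<Sum>t=1..T. l t) \<le> real T * \<gamma>)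
       \<and> (\<forall>L \<gamma>. valid_learner L \<longrightarrow> has_rate N L \<gamma> \<longrightarrow>
            (\<forall>A. valid_adversary A \<longrightarrow>
               (\<forall>T\<ge>1. regret N (play L A T) \<le> real T * \<gamma> T)))"
proof (intro conjI allI impI)
  fix T :: nat and \<alpha> l :: "nat \<Rightarrow> real^'k" and \<gamma> :: real
  assume T: "T \<ge> 1"
    and dist: "dist_to_target N ((1 / real T) *\<^sub>R (\<Sum>t=1..T. payoff (\<alpha> t) (l t))) \<le> \<gamma>"
  have "N (\<Sum>t=1..T. odot (\<alpha> t) (l t)) - Cstar N (\<Sum>t=1..T. l t)
        \<le> real T * dist_to_target N ((1 / real T) *\<^sub>R (\<Sum>t=1..T. payoff (\<alpha> t) (l t)))"
    unfolding sum_payoff using T by (intro norm_minus_Cstar_le_scaled_dist[OF mono]) simp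
  also have "\<dots> \<le> real T * \<gamma>" using dist by (simp add: mult_left_mono)
  finally show "N (\<Sum>t=1..T. odot (\<alpha> t) (l t)) - Cstar N (\<Sum>t=1..T. l t) \<le> real T * \<gamma>" .
next
  fix L \<gamma> and A :: "((real^'k) \<times> (real^'k)) list \<Rightarrow> real^'k \<Rightarrow> real^'k" and T :: nat
  assume "has_rate N L \<gamma>" and "valid_adversary A" and T: "T \<ge> 1"
  then have "dist_to_target N (avg_payoff (play L A T)) \<le> \<gamma> T"
    unfolding has_rate_def by blast
  moreover have "regret N (play L A T) \<le> real T * dist_to_target N (avg_payoff (play L A T))"
    unfolding regret_def avg_payoff_def sum_list_payoff length_play
    using T by (intro norm_minus_Cstar_le_scaled_dist[OF mono]) simp
  ultimately show "regret N (play L A T) \<le> real T * \<gamma> T"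
    by (smt (verit) mult_left_mono of_nat_0_le_iff)
qed

end
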